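(* Consider the multi-agent setting described in the context, with parameters $\alpha>0$ and $F\in\mathbb Z_{\ge0}$. Assume: - the set $\mathcal A$ of misbehaving agents is $F$-local; - the digraph $\mathcal D$ is $(2F+1)$-robust. Let $x_{\mathcal N}:[0,t_1)\to\mathbb R^{|\mathcal N|}$ be a trajectory of the normal agents and let $V(x)=\max_k x_k-\min_k x_k$. Then the derivative $\frac{d}{dt}V(x_{\mathcal N}(t))$ exists at almost all $t\in[0,t_1)$. Furthermore, at almost all $t\in[0,t_1)$ with $x_{\mathcal N}(t)\notin\mathrm{span}(\mathbf 1)$, $$\frac{d}{dt}V(x_{\mathcal N}(t))\le-\alpha<0.$$
   Context: Setting. Let $\mathcal D=(\mathcal V,\mathcal E)$ be a digraph with $\mathcal V=\{1,\dots,n\}$ and $n\ge2$. An edge $(i,j)\in\mathcal E$ means that agent $j$ receives information from agent $i$. The in-neighbor set of $i$ is $\mathcal V_i=\{j:(j,i)\in\mathcal E\}$, and $\mathcal J_i=\mathcal V_i\cup\{i\}$. - A nonempty $S\subset\mathcal V$ is $r$-reachable if some $i\in S$ has $|\mathcal V_i\setminus S|\ge r$. - $\mathcal D$ is $r$-robust if for every pair of nonempty disjoint subsets of $\mathcal V$, at least one of them is $r$-reachable. Dynamics and communication. Each agent has a scalar state with $\dot x_i(t)=u_i(t)$. Fix a strictly increasing $g:\mathbb R\to\mathbb R$ (not necessarily continuous). At time $t$, agent $i$ receives from each in-neighbor $j$ a value $g(x^i_j(t))$. The agents are partitioned into normal agents $\mathcal N$ and misbehaving agents $\mathcal A$. -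 A normal agent $j$ sends $g(x_j(t))$ to all its out-neighbors, so $x^i_j=x_j$, and updates via the FTRC protocol. - Misbehaving agents may use arbitrary inputs and may send arbitrary, possibly different, values to different out-neighbors. The only restriction is that $t\mapsto g(x^i_k(t))$ is Lebesgue measurable for all $k\in\mathcal A$ and $i\in\mathcal N$. - $\mathcal A$ is $F$-local if $|\mathcal V_i\cap\mathcal A|\le F$ for every $i\in\mathcal V\setminus\mathcal A$. FTRC protocol for a normal agent $i$ at time $t$: 1. Sort the received values $g(x^i_j(t))$, $j\in\mathcal V_i$. 2. If fewer than $F$ values are strictly larger than $g(x_i(t))$, remove all values strictly larger than $g(x_i(t))$; otherwise remove exactly the $F$ largest values. 3. Likewise, if fewer than $F$ values are strictly smaller than $g(x_i(t))$, remove all values strictly smaller; otherwise remove exactly the $F$ smallest values. 4. With $\mathcal R_i(t)$ the set of agents whose values were removed, set $u_i(t)=\alpha\,\mathrm{sign}\big(\sum_{j\in\mathcal J_i\setminus\mathcal R_i(t)}(g(x^i_j(t))-g(x_i(t)))\big)$, where $x^i_i=x_i$ and $\mathrm{sign}(0)=0$. Trajectories. Write $x_{\mathcal N}=(x_{\mathcal N_1},\dots,x_{\mathcal N_{|\mathcal N|}})^T$ for a fixed ordering of $\mathcal N$. A trajectory of the normal agents on an interval $I\ni0$ is an absolutely continuous $x_{\mathcal N}:I\to\mathbb R^{|\mathcal N|}$ with $\dot x_{\mathcal N_k}(t)=u_{\mathcal N_k}(t)$ for all $k$ and almost every $t\in I$. Here $\mathbf 1$ is the all-ones vector. *)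

theory Defs
  imports "HOL-Analysis.Analysis"
begin

text \<open>Digraph on vertex set V with edge set E; (i,j) in E means j receives from i.\<close>

definition in_nbrs :: "(nat \<times> nat) set \<Rightarrow> nat \<Rightarrow> nat set" where
  "in_nbrs E i = {j. (j, i) \<in> E}"

definition r_reachable :: "(nat \<times> nat) set \<Rightarrow> nat \<Rightarrow> nat set \<Rightarrow> bool" where
  "r_reachable E r S \<longleftrightarrow> S \<noteq> {} \<and> (\<exists>i\<in>S. card (in_nbrs E i - S) \<ge> r)"

definition r_robust :: "nat set \<Rightarrow> (nat \<times> nat) set \<Rightarrow> nat \<Rightarrow> bool" where
  "r_robust V E r \<longleftrightarrow>
     (\<forall>S1 S2. S1 \<subseteq> V \<and> S2 \<subseteq> V \<and> S1 \<noteq> {} \<and> S2 \<noteq> {} \<and> S1 \<inter> S2 = {}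
        \<longrightarrow> r_reachable E r S1 \<or> r_reachable E r S2)"

definition F_local :: "nat set \<Rightarrow> (nat \<times> nat) set \<Rightarrow> nat set \<Rightarrow> nat \<Rightarrow> bool" where
  "F_local V E A F \<longleftrightarrow> (\<forall>i\<in>V - A. card (in_nbrs E i \<inter> A) \<le> F)"

definition abs_continuous_on :: "real set \<Rightarrow> (real \<Rightarrow> real) \<Rightarrow> bool" where
  "abs_continuous_on I f \<longleftrightarrow>
     (\<forall>\<epsilon>>0. \<exists>\<delta>>0. \<forall>(K::nat set) a b.
        finite K \<and> (\<forall>k\<in>K. a k \<le> b k \<and> {a k..b k} \<subseteq> I)
        \<and> (\<forall>k\<in>K. \<forall>l\<in>K. k \<noteq> l \<longrightarrow> {a k<..<b k} \<inter> {a l<..<b l} = {})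
        \<and> (\<Sum>k\<in>K. b k - a k) < \<delta>
        \<longrightarrow> (\<Sum>k\<in>K. \<bar>f (b k) - f (a k)\<bar>) < \<epsilon>)"

text \<open>Among ties, any choice of which agents realise the F largest/smallest values is allowed;
  the resulting sum in step 4 does not depend on that choice.\<close>
definition ftrc_removed :: "nat \<Rightarrow> nat set \<Rightarrow> (nat \<Rightarrow> real) \<Rightarrow> real \<Rightarrow> nat set \<Rightarrow> bool" where
  "ftrc_removed F Vi w v R \<longleftrightarrow>
     (\<exists>Rp Rm. R = Rp \<union> Rm
       \<and> (if card {j\<in>Vi. w j > v} < F then Rp = {j\<in>Vi. w j > v}
          else Rp \<subseteq> Vi \<and> card Rp = F \<and> (\<forall>j\<in>Rp. \<forall>k\<in>Vi - Rp. w k \<le> w j))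
       \<and> (if card {j\<in>Vi. w j < v} < F then Rm = {j\<in>Vi. w j < v}
          else Rm \<subseteq> Vi \<and> card Rm = F \<and> (\<forall>j\<in>Rm. \<forall>k\<in>Vi - Rm. w j \<le> w k)))"

definition ftrc_input :: "real \<Rightarrow> nat \<Rightarrow> nat \<Rightarrow> nat set \<Rightarrow> (nat \<Rightarrow> real) \<Rightarrow> real \<Rightarrow> real \<Rightarrow> bool" where
  "ftrc_input \<alpha> F i Vi w v u \<longleftrightarrow>
     (\<exists>R. ftrc_removed F Vi w v R \<and>
        u = \<alpha> * sgn (\<Sum>j\<in>(insert i Vi) - R. ((w(i := v)) j - v)))"

end

theory Submission
  imports Defs
begin

text \<open>
  Off a countable set of times, the maximum of finitely many differentiable functions is
  differentiable: where two of them cross with different slopes, the crossing is an isolated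
  zero of their difference. At such a time every normal agent attaining the maximum of the
  normal states moves with the derivative of the maximum (Fermat). Larger values can only reach
  it from its at most F misbehaving in-neighbours, so FTRC discards all of them and its input is
  at most 0; if the set of maximisers is (2F+1)-reachable, some maximiser has at least F+1
  normal in-neighbours with strictly smaller values, they cannot all be discarded, and its input
  is exactly -\<alpha>. Writing the minimum as the maximum of the negated states, which again follow
  FTRC, and applying (2F+1)-robustness to the disjoint sets of maximisers and minimisers shows
  that the range decreases at rate at least \<alpha> unless all normal states agree.
\<close>

lemma countable_isolated_points:
  fixes S :: "'a::euclidean_space set"
  shows "countable {x. x isolated_in S}"
proof -
  let ?I = "{x. x isolated_in S}"
  have "\<forall>x\<in>?I. \<exists>U. open U \<and> U \<inter> S = {x}"
    by (simp add: isolated_in_def)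
  then obtain T where T: "\<And>x. x \<in> ?I \<Longrightarrow> open (T x) \<and> T x \<inter> S = {x}"
    by metis
  define D where "D = \<Union>(T ` ?I)"
  have "?I \<subseteq> S" by (auto simp: isolated_in_def)
  have "\<not> z islimpt ?I" if "x \<in> ?I" "z \<in> T x" for x z
  proof
    assume "z islimpt ?I"
    then have "infinite (T x \<inter> ?I)"
      using T[OF that(1)] that(2) by (simp add: islimpt_eq_acc_point)
    moreover have "T x \<inter> ?I \<subseteq> {x}"
      using T[OF that(1)] \<open>?I \<subseteq> S\<close> by blast
    ultimately show False
      using finite_subset by blast
  qed
  then have "?I sparse_in D"
    unfolding sparse_in_def D_def using T by blast
  moreover have "open D" "?I \<subseteq> D"
    unfolding D_def using T by auto
  ultimately show ?thesis
    using sparse_imp_countable[of D ?I] by (simp add: Int_absorb1)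
qed

lemma DERIV_nonzero_eventually_ne:
  assumes "(f has_real_derivative a) (at t)" "a \<noteq> 0"
  shows "eventually (\<lambda>s. f s \<noteq> f t) (at t)"
proof -
  have "((\<lambda>s. (f s - f t) / (s - t)) \<longlongrightarrow> a) (at t)"
    using assms(1) by (simp add: has_field_derivative_iff)
  then have "eventually (\<lambda>s. (f s - f t) / (s - t) \<noteq> 0) (at t)"
    using assms(2) by (rule tendsto_imp_eventually_ne)
  then show ?thesis by eventually_elim auto
qed

lemma DERIV_max_touching:
  fixes f g :: "real \<Rightarrow> real"
  assumes f: "(f has_real_derivative a) (at t)" and g: "(g has_real_derivative a) (at t)"
    and "f t = g t"
  shows "((\<lambda>s. max (f s) (g s)) has_real_derivative a) (at t)"
proof -
  let ?q = "\<lambda>h s. (h s - h t) / (s - t) - a"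
  have "(?q f \<longlongrightarrow> 0) (at t)" "(?q g \<longlongrightarrow> 0) (at t)"
    using f g by (simp_all add: has_field_derivative_iff LIM_zero)
  then have lim: "((\<lambda>s. \<bar>?q f s\<bar> + \<bar>?q g s\<bar>) \<longlongrightarrow> 0) (at t)"
    by (intro tendsto_add_zero tendsto_rabs_zero)
  have bound: "norm (?q (\<lambda>s. max (f s) (g s)) s) \<le> \<bar>?q f s\<bar> + \<bar>?q g s\<bar>" for s
    using \<open>f t = g t\<close> by (cases "f s \<le> g s") (simp_all add: max_def)
  have "(?q (\<lambda>s. max (f s) (g s)) \<longlongrightarrow> 0) (at t)"
    using always_eventually[OF allI[OF bound]] lim by (rule Lim_null_comparison)
  then show ?thesis
    using \<open>f t = g t\<close> by (simp add: has_field_derivative_iff LIM_zero_iff)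
qed

lemma DERIV_max_greater:
  fixes f g :: "real \<Rightarrow> real"
  assumes f: "(f has_real_derivative a) (at t)" and "isCont g t" and "g t < f t"
  shows "((\<lambda>s. max (f s) (g s)) has_real_derivative a) (at t)"
proof -
  have "isCont (\<lambda>s. f s - g s) t"
    using DERIV_isCont[OF f] \<open>isCont g t\<close> by (rule isCont_diff)
  then have "eventually (\<lambda>s. 0 < f s - g s) (at t)"
    using \<open>g t < f t\<close> by (intro order_tendstoD(1)) (auto simp: isCont_def)
  then have "eventually (\<lambda>s. f s = max (f s) (g s)) (nhds t)"
    unfolding eventually_nhds_conv_at using \<open>g t < f t\<close> by (auto elim: eventually_mono)
  then show ?thesis
    using f by (simp add: DERIV_cong_ev)
qed

lemma differentiable_max_at:
  fixes f g :: "real \<Rightarrow> real"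
  assumes f: "(f has_real_derivative a) (at t)" and g: "(g has_real_derivative b) (at t)"
    and "f t \<noteq> g t \<or> a = b"
  shows "(\<lambda>s. max (f s) (g s)) differentiable (at t)"
proof -
  consider "f t < g t" | "g t < f t" | "f t = g t" "a = b"
    using assms(3) by linarith
  then have "\<exists>D. ((\<lambda>s. max (f s) (g s)) has_real_derivative D) (at t)"
  proof cases
    case 1
    then show ?thesis
      using DERIV_max_greater[OF g DERIV_isCont[OF f]] by (auto simp: max.commute)
  next
    case 2
    then show ?thesis
      using DERIV_max_greater[OF f DERIV_isCont[OF g]] by auto
  next
    case 3
    then show ?thesis
      using DERIV_max_touching f g by blast
  qed
  then show ?thesis
    by (simp add: real_differentiable_def)
qed

lemma countable_nondifferentiable_max:
  fixes f g :: "real \<Rightarrow> real"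
  shows "countable {t. f differentiable (at t) \<and> g differentiable (at t) \<and>
    \<not> (\<lambda>s. max (f s) (g s)) differentiable (at t)}"
proof (rule countable_subset[OF _ countable_isolated_points])
  show "{t. f differentiable (at t) \<and> g differentiable (at t) \<and>
      \<not> (\<lambda>s. max (f s) (g s)) differentiable (at t)} \<subseteq> {t. t isolated_in {s. f s - g s = 0}}"
  proof safe
    fix t assume "f differentiable (at t)" "g differentiable (at t)"
      and nondiff: "\<not> (\<lambda>s. max (f s) (g s)) differentiable (at t)"
    then obtain a b where f: "(f has_real_derivative a) (at t)" and g: "(g has_real_derivative b) (at t)"
      by (auto simp: real_differentiable_def)
    then have "f t = g t" "a \<noteq> b"
      using differentiable_max_at[OF f g] nondiff by auto
    moreover have "((\<lambda>s. f s - g s) has_real_derivative a - b) (at t)"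
      using f g by (rule DERIV_diff)
    ultimately have "eventually (\<lambda>s. f s - g s \<noteq> 0) (at t)"
      using DERIV_nonzero_eventually_ne by force
    then show "t isolated_in {s. f s - g s = 0}"
      using \<open>f t = g t\<close> by (simp add: isolated_in_islimpt_iff islimpt_iff_eventually)
  qed
qed

lemma countable_nondifferentiable_Max:
  fixes x :: "'i \<Rightarrow> real \<Rightarrow> real"
  assumes "finite S" "S \<noteq> {}"
  shows "countable {t. (\<forall>i\<in>S. x i differentiable (at t)) \<and>
    \<not> (\<lambda>s. Max ((\<lambda>i. x i s) ` S)) differentiable (at t)}"
  using assms
proof (induction S rule: finite_ne_induct)
  case (insert a S)
  let ?M = "\<lambda>s. Max ((\<lambda>i. x i s) ` S)"
  have "(\<lambda>s. Max ((\<lambda>i. x i s) ` insert a S)) = (\<lambda>s. max (x a s) (?M s))"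
    using insert by simp
  then have "{t. (\<forall>i\<in>insert a S. x i differentiable (at t)) \<and>
      \<not> (\<lambda>s. Max ((\<lambda>i. x i s) ` insert a S)) differentiable (at t)}
    \<subseteq> {t. (\<forall>i\<in>S. x i differentiable (at t)) \<and> \<not> ?M differentiable (at t)}
      \<union> {t. x a differentiable (at t) \<and> ?M differentiable (at t) \<and>
          \<not> (\<lambda>s. max (x a s) (?M s)) differentiable (at t)}"
    by auto
  moreover have "countable ({t. (\<forall>i\<in>S. x i differentiable (at t)) \<and> \<not> ?M differentiable (at t)}
      \<union> {t. x a differentiable (at t) \<and> ?M differentiable (at t) \<and>
          \<not> (\<lambda>s. max (x a s) (?M s)) differentiable (at t)})"
    using insert.IH countable_nondifferentiable_max by (rule countable_Un)
  ultimately show ?case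
    by (rule countable_subset)
qed simp

lemma AE_differentiable_Max:
  fixes x :: "'i \<Rightarrow> real \<Rightarrow> real"
  assumes "finite S" "S \<noteq> {}"
  shows "AE t in lebesgue. (\<forall>i\<in>S. x i differentiable (at t))
    \<longrightarrow> (\<lambda>s. Max ((\<lambda>i. x i s) ` S)) differentiable (at t)"
proof -
  have "{t. (\<forall>i\<in>S. x i differentiable (at t)) \<and> \<not> (\<lambda>s. Max ((\<lambda>i. x i s) ` S)) differentiable (at t)}
      \<in> null_sets lebesgue"
    using countable_nondifferentiable_Max[OF assms]
    by (intro null_sets_completionI countable_imp_null_set_lborel)
  from AE_not_in[OF this] show ?thesis
    by eventually_elim blast
qed

lemma DERIV_eq_if_touching:
  fixes f h :: "real \<Rightarrow> real"
  assumes "(f has_real_derivative a) (at t)" "(h has_real_derivative b) (at t)"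
    and "\<And>s. f s \<le> h s" "f t = h t"
  shows "a = b"
proof -
  have "((\<lambda>s. f s - h s) has_real_derivative a - b) (at t)"
    using assms(1,2) by (rule DERIV_diff)
  moreover have "\<forall>s. \<bar>t - s\<bar> < 1 \<longrightarrow> f s - h s \<le> f t - h t"
    using assms(3,4) by (simp add: le_diff_eq)
  ultimately show ?thesis
    using DERIV_local_max[of "\<lambda>s. f s - h s" "a - b" t 1] by simp
qed

lemma Max_attained:
  fixes f :: "'a \<Rightarrow> 'b::linorder"
  assumes "finite N" "N \<noteq> {}"
  shows "{i\<in>N. f i = Max (f ` N)} \<noteq> {}"
proof -
  have "Max (f ` N) \<in> f ` N"
    using assms by (intro Max_in) auto
  then obtain i where "Max (f ` N) = f i" "i \<in> N"
    by (rule imageE)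
  then have "i \<in> {i\<in>N. f i = Max (f ` N)}"
    by simp
  then show ?thesis
    by blast
qed

lemma Max_minus_Min_eq:
  fixes f :: "'a \<Rightarrow> 'b::linordered_ab_group_add"
  assumes "finite S" "S \<noteq> {}"
  shows "Max (f ` S) - Min (f ` S) = Max (f ` S) + Max ((\<lambda>i. - f i) ` S)"
proof -
  have "- Min (f ` S) = Max (uminus ` f ` S)"
    using assms by (intro minus_Min_eq_Max) auto
  then show ?thesis
    by (simp add: image_image)
qed

lemma ftrc_removed_upper_eq:
  fixes w :: "'a \<Rightarrow> real"
  assumes "finite Vi" "card {j\<in>Vi. v < w j} \<le> F"
    and "if card {j\<in>Vi. v < w j} < F then Rp = {j\<in>Vi. v < w j}
         else Rp \<subseteq> Vi \<and> card Rp = F \<and> (\<forall>j\<in>Rp. \<forall>k\<in>Vi - Rp. w k \<le> w j)"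
  shows "Rp = {j\<in>Vi. v < w j}"
proof (cases "card {j\<in>Vi. v < w j} < F")
  case False
  let ?G = "{j\<in>Vi. v < w j}"
  have Rp: "Rp \<subseteq> Vi" "card Rp = card ?G" "\<forall>j\<in>Rp. \<forall>k\<in>Vi - Rp. w k \<le> w j"
    using assms(2,3) False by auto
  have "?G \<subseteq> Rp"
  proof (rule ccontr)
    assume "\<not> ?G \<subseteq> Rp"
    then obtain k where k: "k \<in> ?G" "k \<notin> Rp" by blast
    then have "w k \<le> w j" if "j \<in> Rp" for j
      using Rp(3) that by blast
    then have "Rp \<subseteq> ?G"
      using Rp(1) k(1) by (auto intro: less_le_trans)
    then have "Rp \<subset> ?G" using k by blast
    then show False
      using Rp(2) psubset_card_mono[of ?G Rp] assms(1) by simp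
  qed
  then show ?thesis
    using Rp(1,2) assms(1) by (metis card_subset_eq finite_subset)
qed (use assms in simp)

lemma ftrc_input_if_few_larger:
  assumes "finite Vi" "i \<notin> Vi" "\<alpha> > 0" "card {j\<in>Vi. v < w j} \<le> F"
    and "ftrc_input \<alpha> F i Vi w v u"
  shows "u \<le> 0" and "F < card {j\<in>Vi. w j < v} \<Longrightarrow> u = - \<alpha>"
proof -
  obtain Rp Rm where
      u: "u = \<alpha> * sgn (\<Sum>j\<in>insert i Vi - (Rp \<union> Rm). (w(i := v)) j - v)"
    and Rp: "if card {j\<in>Vi. v < w j} < F then Rp = {j\<in>Vi. v < w j}
          else Rp \<subseteq> Vi \<and> card Rp = F \<and> (\<forall>j\<in>Rp. \<forall>k\<in>Vi - Rp. w k \<le> w j)"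
    and Rm: "if card {j\<in>Vi. w j < v} < F then Rm = {j\<in>Vi. w j < v}
          else Rm \<subseteq> Vi \<and> card Rm = F \<and> (\<forall>j\<in>Rm. \<forall>k\<in>Vi - Rm. w j \<le> w k)"
    using assms(5) unfolding ftrc_input_def ftrc_removed_def by blast
  let ?T = "insert i Vi - (Rp \<union> Rm)"
  let ?d = "\<lambda>j. (w(i := v)) j - v"
  have "Rp = {j\<in>Vi. v < w j}"
    using ftrc_removed_upper_eq[OF assms(1,4) Rp] .
  then have nonpos: "?d j \<le> 0" if "j \<in> ?T" for j
    using that by auto
  then have "sum ?d ?T \<le> 0"
    by (rule sum_nonpos)
  then show "u \<le> 0"
    using u \<open>\<alpha> > 0\<close> by (simp add: mult_nonneg_nonpos)
  assume "F < card {j\<in>Vi. w j < v}"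
  then have "Rm \<subseteq> Vi" "card Rm < card {j\<in>Vi. w j < v}"
    using Rm by auto
  then have "\<not> {j\<in>Vi. w j < v} \<subseteq> Rm"
    using assms(1) by (meson card_mono finite_subset leD)
  then obtain k where k: "k \<in> Vi" "w k < v" "k \<notin> Rm"
    by blast
  have "k \<in> ?T"
    using k \<open>Rp = {j\<in>Vi. v < w j}\<close> by auto
  have "sum ?d ?T = ?d k + sum ?d (?T - {k})"
    using \<open>k \<in> ?T\<close> assms(1) by (simp add: sum.remove)
  also have "\<dots> < 0"
  proof -
    have "?d k < 0"
      using k assms(2) by auto
    moreover have "sum ?d (?T - {k}) \<le> 0"
      using nonpos by (intro sum_nonpos) auto
    ultimately show ?thesis by linarith
  qed
  finally show "u = - \<alpha>"
    using u by simp
qed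

lemma ftrc_input_uminus:
  assumes "ftrc_input \<alpha> F i Vi w v u"
  shows "ftrc_input \<alpha> F i Vi (\<lambda>j. - w j) (- v) (- u)"
proof -
  obtain Rp Rm where
      u: "u = \<alpha> * sgn (\<Sum>j\<in>insert i Vi - (Rp \<union> Rm). (w(i := v)) j - v)"
    and Rp: "if card {j\<in>Vi. v < w j} < F then Rp = {j\<in>Vi. v < w j}
          else Rp \<subseteq> Vi \<and> card Rp = F \<and> (\<forall>j\<in>Rp. \<forall>k\<in>Vi - Rp. w k \<le> w j)"
    and Rm: "if card {j\<in>Vi. w j < v} < F then Rm = {j\<in>Vi. w j < v}
          else Rm \<subseteq> Vi \<and> card Rm = F \<and> (\<forall>j\<in>Rm. \<forall>k\<in>Vi - Rm. w j \<le> w k)"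
    using assms unfolding ftrc_input_def ftrc_removed_def by blast
  have "ftrc_removed F Vi (\<lambda>j. - w j) (- v) (Rm \<union> Rp)"
    unfolding ftrc_removed_def neg_less_iff_less neg_le_iff_le using Rp Rm
    by (intro exI[of _ Rm] exI[of _ Rp]) simp
  moreover have "(\<Sum>j\<in>insert i Vi - (Rm \<union> Rp). ((\<lambda>j. - w j)(i := - v)) j - - v)
      = - (\<Sum>j\<in>insert i Vi - (Rp \<union> Rm). (w(i := v)) j - v)"
    unfolding sum_negf[symmetric] Un_commute[of Rm Rp] by (rule sum.cong) auto
  ultimately show ?thesis
    unfolding ftrc_input_def using u by (auto simp: sgn_minus)
qed

lemma normal_in_nbrs_bounds:
  assumes "E \<subseteq> V \<times> V" "finite V" "\<forall>i. (i, i) \<notin> E"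
    and "N \<union> A = V" "N \<inter> A = {}" "F_local V E A F" "i \<in> N"
  shows "finite (in_nbrs E i) \<and> i \<notin> in_nbrs E i \<and> card (in_nbrs E i - N) \<le> F"
proof -
  have sub: "in_nbrs E i \<subseteq> V"
    using assms(1) by (auto simp: in_nbrs_def)
  then have "finite (in_nbrs E i)"
    using assms(2) by (rule finite_subset)
  moreover have "i \<notin> in_nbrs E i"
    using assms(3) by (simp add: in_nbrs_def)
  moreover have "in_nbrs E i - N = in_nbrs E i \<inter> A"
    using sub assms(4,5) by blast
  moreover have "card (in_nbrs E i \<inter> A) \<le> F"
    using assms(4-7) unfolding F_local_def by blast
  ultimately show ?thesis
    by simp
qed

lemma DERIV_Max_under_ftrc:
  fixes x :: "nat \<Rightarrow> real \<Rightarrow> real" and w :: "nat \<Rightarrow> nat \<Rightarrow> real"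
  assumes "finite N" "N \<noteq> {}" "strict_mono g" "\<alpha> > 0"
    and nbrs: "\<And>i. i \<in> N \<Longrightarrow> finite (in_nbrs E i) \<and> i \<notin> in_nbrs E i \<and> card (in_nbrs E i - N) \<le> F"
    and sent: "\<And>i j. i \<in> N \<Longrightarrow> j \<in> N \<Longrightarrow> w i j = g (x j t)"
    and deriv: "\<And>i. i \<in> N \<Longrightarrow> (x i has_real_derivative u i) (at t)"
    and input: "\<And>i. i \<in> N \<Longrightarrow> ftrc_input \<alpha> F i (in_nbrs E i) (w i) (g (x i t)) (u i)"
    and Max: "((\<lambda>s. Max ((\<lambda>i. x i s) ` N)) has_real_derivative D) (at t)"
  shows "D \<le> 0"
    and "r_reachable E (2 * F + 1) {i\<in>N. x i t = Max ((\<lambda>i. x i t) ` N)} \<Longrightarrow> D = - \<alpha>"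
proof -
  let ?S = "{i\<in>N. x i t = Max ((\<lambda>i. x i t) ` N)}"
  have le_Max: "x i s \<le> Max ((\<lambda>i. x i s) ` N)" if "i \<in> N" for i s
    using assms(1) that by auto
  have g_less: "g a < g b \<longleftrightarrow> a < b" for a b
    using assms(3) by (rule strict_mono_less)
  have u_eq: "u i = D" if "i \<in> ?S" for i
    using DERIV_eq_if_touching[OF deriv Max le_Max] that by auto
  have few_above: "card {j\<in>in_nbrs E i. g (x i t) < w i j} \<le> F" if "i \<in> ?S" for i
  proof -
    have "{j\<in>in_nbrs E i. g (x i t) < w i j} \<subseteq> in_nbrs E i - N"
      using that sent le_Max g_less by (force simp: not_less[symmetric])
    then have "card {j\<in>in_nbrs E i. g (x i t) < w i j} \<le> card (in_nbrs E i - N)"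
      using nbrs[of i] that by (intro card_mono) auto
    then show ?thesis
      using nbrs[of i] that by simp
  qed
  have at_max: "u i \<le> 0" "F < card {j\<in>in_nbrs E i. w i j < g (x i t)} \<Longrightarrow> u i = - \<alpha>"
    if "i \<in> ?S" for i
    using ftrc_input_if_few_larger[OF _ _ \<open>\<alpha> > 0\<close> few_above[OF that] input] nbrs that by auto
  obtain i0 where "i0 \<in> ?S"
    using Max_attained[OF assms(1,2), of "\<lambda>i. x i t"] by blast
  then show "D \<le> 0"
    using at_max(1) u_eq by force
  assume "r_reachable E (2 * F + 1) ?S"
  then obtain i where i: "i \<in> ?S" and "2 * F + 1 \<le> card (in_nbrs E i - ?S)"
    unfolding r_reachable_def by blast
  let ?V = "in_nbrs E i"
  have "card (?V - ?S) = card ((?V - ?S) \<inter> N) + card (?V - ?S - N)"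
    using nbrs[of i] i by (simp add: card_Int_Diff)
  moreover have "card (?V - ?S - N) \<le> card (?V - N)"
    using nbrs[of i] i by (intro card_mono) auto
  moreover have "(?V - ?S) \<inter> N \<subseteq> {j\<in>?V. w i j < g (x i t)}"
    using i sent le_Max g_less by (force simp: order.strict_iff_order)
  then have "card ((?V - ?S) \<inter> N) \<le> card {j\<in>?V. w i j < g (x i t)}"
    using nbrs[of i] i by (intro card_mono) auto
  ultimately have "F < card {j\<in>?V. w i j < g (x i t)}"
    using \<open>2 * F + 1 \<le> card (?V - ?S)\<close> nbrs[of i] i by simp
  then show "D = - \<alpha>"
    using at_max(2)[OF i] u_eq[OF i] by simp
qed

lemma DERIV_range_under_ftrc:
  fixes x :: "nat \<Rightarrow> real \<Rightarrow> real" and w :: "nat \<Rightarrow> nat \<Rightarrow> real"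
  assumes "finite N" "N \<noteq> {}" "N \<subseteq> V" "strict_mono g" "\<alpha> > 0"
    and robust: "r_robust V E (2 * F + 1)"
    and nbrs: "\<And>i. i \<in> N \<Longrightarrow> finite (in_nbrs E i) \<and> i \<notin> in_nbrs E i \<and> card (in_nbrs E i - N) \<le> F"
    and sent: "\<And>i j. i \<in> N \<Longrightarrow> j \<in> N \<Longrightarrow> w i j = g (x j t)"
    and deriv: "\<And>i. i \<in> N \<Longrightarrow> (x i has_real_derivative u i) (at t)"
    and input: "\<And>i. i \<in> N \<Longrightarrow> ftrc_input \<alpha> F i (in_nbrs E i) (w i) (g (x i t)) (u i)"
    and diff_upper: "(\<lambda>s. Max ((\<lambda>i. x i s) ` N)) differentiable (at t)"
    and diff_lower: "(\<lambda>s. Max ((\<lambda>i. - x i s) ` N)) differentiable (at t)"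
  shows "\<exists>D. ((\<lambda>s. Max ((\<lambda>i. x i s) ` N) + Max ((\<lambda>i. - x i s) ` N)) has_real_derivative D) (at t)
    \<and> ((\<exists>i\<in>N. \<exists>j\<in>N. x i t \<noteq> x j t) \<longrightarrow> D \<le> - \<alpha>)"
proof -
  obtain D1 where D1: "((\<lambda>s. Max ((\<lambda>i. x i s) ` N)) has_real_derivative D1) (at t)"
    using diff_upper unfolding real_differentiable_def by blast
  obtain D2 where D2: "((\<lambda>s. Max ((\<lambda>i. - x i s) ` N)) has_real_derivative D2) (at t)"
    using diff_lower unfolding real_differentiable_def by blast
  let ?S1 = "{i\<in>N. x i t = Max ((\<lambda>i. x i t) ` N)}"
  let ?S2 = "{i\<in>N. - x i t = Max ((\<lambda>i. - x i t) ` N)}"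
  note upper = DERIV_Max_under_ftrc[OF assms(1,2,4,5) nbrs sent deriv input D1]
  have "strict_mono (\<lambda>s. - g (- s))"
    using \<open>strict_mono g\<close> by (simp add: strict_mono_def)
  note lower = DERIV_Max_under_ftrc[where x = "\<lambda>i s. - x i s" and w = "\<lambda>i j. - w i j"
      and u = "\<lambda>i. - u i", OF assms(1,2) this \<open>\<alpha> > 0\<close> nbrs _ _ _ D2]
  have D2_le: "D2 \<le> 0" and D2_eq: "r_reachable E (2 * F + 1) ?S2 \<Longrightarrow> D2 = - \<alpha>"
    using lower sent deriv input by (simp_all add: DERIV_minus ftrc_input_uminus)
  have "D1 + D2 \<le> - \<alpha>" if "\<exists>i\<in>N. \<exists>j\<in>N. x i t \<noteq> x j t"
  proof -
    have "x j t = x k t" if "k \<in> ?S1 \<inter> ?S2" "j \<in> N" for j k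
    proof -
      have "x j t \<le> Max ((\<lambda>i. x i t) ` N)" "- x j t \<le> Max ((\<lambda>i. - x i t) ` N)"
        using assms(1) \<open>j \<in> N\<close> by auto
      then show ?thesis
        using \<open>k \<in> ?S1 \<inter> ?S2\<close> by auto
    qed
    then have "?S1 \<inter> ?S2 = {}"
      using that by (metis (no_types, lifting) equals0I)
    moreover have "?S1 \<subseteq> V" "?S2 \<subseteq> V"
      using \<open>N \<subseteq> V\<close> by blast+
    ultimately have "r_reachable E (2 * F + 1) ?S1 \<or> r_reachable E (2 * F + 1) ?S2"
      using robust[unfolded r_robust_def, rule_format, of ?S1 ?S2]
        Max_attained[OF assms(1,2), of "\<lambda>i. x i t"] Max_attained[OF assms(1,2), of "\<lambda>i. - x i t"]
      by blast
    then show ?thesis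
    proof
      assume "r_reachable E (2 * F + 1) ?S1"
      then show ?thesis
        using upper(2) D2_le by simp
    next
      assume "r_reachable E (2 * F + 1) ?S2"
      then show ?thesis
        using upper(1) D2_eq by simp
    qed
  qed
  then show ?thesis
    using DERIV_add[OF D1 D2] by blast
qed

lemma AE_DERIV_range_under_ftrc:
  fixes x :: "nat \<Rightarrow> real \<Rightarrow> real" and w :: "real \<Rightarrow> nat \<Rightarrow> nat \<Rightarrow> real"
  assumes "finite N" "N \<noteq> {}" "N \<subseteq> V" "strict_mono g" "\<alpha> > 0"
    and robust: "r_robust V E (2 * F + 1)"
    and nbrs: "\<And>i. i \<in> N \<Longrightarrow> finite (in_nbrs E i) \<and> i \<notin> in_nbrs E i \<and> card (in_nbrs E i - N) \<le> F"
    and sent: "\<And>t i j. i \<in> N \<Longrightarrow> j \<in> N \<Longrightarrow> w t i j = g (x j t)"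
    and traj: "\<forall>i\<in>N. AE t in lebesgue. t \<in> I \<longrightarrow>
      (\<exists>u. (x i has_real_derivative u) (at t) \<and> ftrc_input \<alpha> F i (in_nbrs E i) (w t i) (g (x i t)) u)"
  shows "AE t in lebesgue. t \<in> I \<longrightarrow>
    (\<exists>D. ((\<lambda>s. Max ((\<lambda>i. x i s) ` N) + Max ((\<lambda>i. - x i s) ` N)) has_real_derivative D) (at t)
      \<and> ((\<exists>i\<in>N. \<exists>j\<in>N. x i t \<noteq> x j t) \<longrightarrow> D \<le> - \<alpha>))"
  using AE_differentiable_Max[OF assms(1,2), of x]
    AE_differentiable_Max[OF assms(1,2), of "\<lambda>i s. - x i s"]
    eventually_ball_finite[OF assms(1) traj]
proof eventually_elim
  case (elim t)
  show ?case
  proof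
    assume "t \<in> I"
    then have "\<forall>i\<in>N. \<exists>u. (x i has_real_derivative u) (at t) \<and>
        ftrc_input \<alpha> F i (in_nbrs E i) (w t i) (g (x i t)) u"
      using elim(3) by blast
    then obtain u where "\<forall>i\<in>N. (x i has_real_derivative u i) (at t) \<and>
        ftrc_input \<alpha> F i (in_nbrs E i) (w t i) (g (x i t)) (u i)"
      by (rule bchoice[elim_format]) blast
    then have deriv: "\<And>i. i \<in> N \<Longrightarrow> (x i has_real_derivative u i) (at t)"
      and input: "\<And>i. i \<in> N \<Longrightarrow> ftrc_input \<alpha> F i (in_nbrs E i) (w t i) (g (x i t)) (u i)"
      by blast+
    then have "(\<lambda>s. Max ((\<lambda>i. x i s) ` N)) differentiable (at t)"
      "(\<lambda>s. Max ((\<lambda>i. - x i s) ` N)) differentiable (at t)"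
      using elim(1,2) by (auto simp: real_differentiable_def intro: DERIV_minus)
    then show "\<exists>D. ((\<lambda>s. Max ((\<lambda>i. x i s) ` N) + Max ((\<lambda>i. - x i s) ` N)) has_real_derivative D) (at t)
        \<and> ((\<exists>i\<in>N. \<exists>j\<in>N. x i t \<noteq> x j t) \<longrightarrow> D \<le> - \<alpha>)"
      using DERIV_range_under_ftrc[where w = "w t", OF assms(1-5) robust nbrs _ deriv input] sent
      by simp
  qed
qed

theorem theorem4:
  fixes n F :: nat and \<alpha> t1 :: real
    and E :: "(nat \<times> nat) set" and N A :: "nat set"
    and g :: "real \<Rightarrow> real"
    and x :: "nat \<Rightarrow> real \<Rightarrow> real"        \<comment> \<open>x i t: state of normal agent i\<close>
    and y :: "nat \<Rightarrow> nat \<Rightarrow> real \<Rightarrow> real"  \<comment> \<open>y i k t: value x^i_k(t) sent by misbehaving k to i\<close>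
  assumes n2: "n \<ge> 2"
    and E_sub: "E \<subseteq> {1..n} \<times> {1..n}"
    and E_irrefl: "\<forall>i. (i, i) \<notin> E"
    and part: "N \<union> A = {1..n}" "N \<inter> A = {}"
    and N_ne: "N \<noteq> {}"
    and alpha_pos: "\<alpha> > 0"
    and g_mono: "strict_mono g"
    and meas: "\<forall>i\<in>N. \<forall>k\<in>A. (\<lambda>t. g (y i k t)) \<in> borel_measurable lebesgue"
    and loc: "F_local {1..n} E A F"
    and rob: "r_robust {1..n} E (2 * F + 1)"
    and ac: "\<forall>i\<in>N. abs_continuous_on {0..<t1} (x i)"
    and traj: "\<forall>i\<in>N. AE t in lebesgue. t \<in> {0..<t1} \<longrightarrow>
               (\<exists>u. (x i has_real_derivative u) (at t) \<and>
                    ftrc_input \<alpha> F i (in_nbrs E i)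
                      (\<lambda>j. g (if j \<in> N then x j t else y i j t)) (g (x i t)) u)"
  shows "(AE t in lebesgue. t \<in> {0..<t1} \<longrightarrow>
            (\<lambda>s. Max ((\<lambda>i. x i s) ` N) - Min ((\<lambda>i. x i s) ` N)) differentiable (at t))
       \<and> (AE t in lebesgue. t \<in> {0..<t1} \<and> (\<exists>i\<in>N. \<exists>j\<in>N. x i t \<noteq> x j t) \<longrightarrow>
            (\<exists>D. ((\<lambda>s. Max ((\<lambda>i. x i s) ` N) - Min ((\<lambda>i. x i s) ` N)) has_real_derivative D) (at t)
                 \<and> D \<le> - \<alpha> \<and> - \<alpha> < 0))"
proof -
  have "N \<subseteq> {1..n}" "finite N"
    using part(1) by (auto intro: finite_subset)
  have "AE t in lebesgue. t \<in> {0..<t1} \<longrightarrow>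
      (\<exists>D. ((\<lambda>s. Max ((\<lambda>i. x i s) ` N) + Max ((\<lambda>i. - x i s) ` N)) has_real_derivative D) (at t)
        \<and> ((\<exists>i\<in>N. \<exists>j\<in>N. x i t \<noteq> x j t) \<longrightarrow> D \<le> - \<alpha>))"
    using normal_in_nbrs_bounds[OF E_sub _ E_irrefl part loc]
    by (intro AE_DERIV_range_under_ftrc[OF \<open>finite N\<close> N_ne \<open>N \<subseteq> {1..n}\<close> g_mono alpha_pos rob _ _ traj])
      auto
  moreover have "- \<alpha> < 0"
    using alpha_pos by simp
  ultimately show ?thesis
    unfolding Max_minus_Min_eq[OF \<open>finite N\<close> N_ne] real_differentiable_def
    by (intro conjI; elim eventually_mono; blast)
qed

end
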